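(* Let $k\ge3$ and let $\{S_n\}$ be a perturbed sequence of weak shifts of degree $d$ corresponding to a uniformly bounded sequence of weak shift-like maps of degree $\tilde d\le d-2$, with Green function $G$. For each $m\ge1$ let $\mathsf G_m$ be the Green function of the periodic sequence $\{s^m_n\}_{n\ge1}$. Then for every compact set $C\subset\mathbb{C}^k$ and every $\epsilon>0$ there exists $\mathbf m_C\ge1$ such that $\sup_{z\in C}|G(z)-\mathsf G_m(z)|<\epsilon$ for all $m\ge\mathbf m_C$.
   Context: Let $Q_m(z)=z^m$ and $\mathbf H_d(w_1,\dots,w_{k-1})=\sum_{i=1}^{k-1}w_i^d$. A uniformly bounded sequence of weak shift-like maps of degree $\tilde d\ge1$ is a sequence $\mathsf S_n(z)=(z_2,\dots,z_k,a_nz_1+p_n(z_2,\dots,z_k))$ with $\deg(a_nz_1+p_n)=\tilde d$, $p_n=\sum_i\alpha_{i,n}\mathbf z^i$, and constants $\tilde m,\tilde M>0$ with $\tilde m<|a_n|<\tilde M$, $|\alpha_{i,n}|<\tilde M$. The associated perturbed sequence of weak shifts of degree $d\ge\tilde d+2$ is $S_n(z)=\mathsf S_n(z)+(0,\dots,0,Q_{d-1}(z_2),\mathbf H_d(z_2,\dots,z_k))$. For any such sequence $\{T_n\}$, with $T(n)=T_n\circ\cdots\circ T_1$, its escaping set is $U^+_{\{T_n\}}=\{z:\overline{T(n)}([z:1])\to[0:\cdots:0:1:0]\}$ (extension to $\mathbb{P}^k$, limit point with only the $k$-th homogeneous coordinate nonzero), and its Green function is $z\mapsto\lim_{n\to\infty}d^{-n}\log^+\|T(n)(z)\|_{\sup}$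 on $U^+_{\{T_n\}}$ and $0$ on $\mathbb{C}^k\setminus U^+_{\{T_n\}}$ ($\|\cdot\|_{\sup}$ the sup-norm, $\log^+=\max\{\log,0\}$). $G$ denotes the Green function of $\{S_n\}$. For $m\ge1$, $s^m_n=S_j$ where $j\in\{1,\dots,m\}$ and $j\equiv n\pmod m$; $\{s^m_n\}$ is again such a perturbed sequence, and $\mathsf G_m$ is its Green function. *)

theory Defs
  imports "HOL-Analysis.Analysis"
begin

text \<open>Points of C^k are modelled as functions nat => complex whose coordinates
  z 1, ..., z k are the actual coordinates and which vanish outside {1..k}.
  The topology is the product topology on nat => complex, which on this
  subspace is the Euclidean topology of C^k.\<close>

definition Ck :: "nat \<Rightarrow> (nat \<Rightarrow> complex) set" where
  "Ck k = {z. \<forall>i. i \<notin> {1..k} \<longrightarrow> z i = 0}"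

definition supnorm :: "nat \<Rightarrow> (nat \<Rightarrow> complex) \<Rightarrow> real" where
  "supnorm k z = Max ((\<lambda>i. norm (z i)) ` {1..k})"

definition logplus :: "real \<Rightarrow> real" where
  "logplus x = max (ln x) 0"

text \<open>Multi-indices for monomials in z_2, ..., z_k with every exponent at most dt
  (a finite set containing all monomials of total degree at most dt).\<close>

definition midx :: "nat \<Rightarrow> nat \<Rightarrow> (nat \<Rightarrow> nat) set" where
  "midx k dt = (\<Pi>\<^sub>E j\<in>{2..k}. {..dt})"

definition mdeg :: "nat \<Rightarrow> (nat \<Rightarrow> nat) \<Rightarrow> nat" where
  "mdeg k i = (\<Sum>j=2..k. i j)"

definition poly_p :: "nat \<Rightarrow> nat \<Rightarrow> ((nat \<Rightarrow> nat) \<Rightarrow> complex) \<Rightarrow> (nat \<Rightarrow> complex) \<Rightarrow> complex" where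
  "poly_p k dt \<alpha> z = (\<Sum>i\<in>midx k dt. \<alpha> i * (\<Prod>j=2..k. z j ^ i j))"

definition pws :: "nat \<Rightarrow> nat \<Rightarrow> nat \<Rightarrow> complex \<Rightarrow> ((nat \<Rightarrow> nat) \<Rightarrow> complex)
    \<Rightarrow> (nat \<Rightarrow> complex) \<Rightarrow> (nat \<Rightarrow> complex)" where
  "pws k d dt a \<alpha> z = (\<lambda>j.
     if 1 \<le> j \<and> j \<le> k - 2 then z (j + 1)
     else if j = k - 1 then z k + z 2 ^ (d - 1)
     else if j = k then a * z 1 + poly_p k dt \<alpha> z + (\<Sum>i=2..k. z i ^ d)
     else 0)"

primrec comp_seq :: "(nat \<Rightarrow> 'a \<Rightarrow> 'a) \<Rightarrow> nat \<Rightarrow> 'a \<Rightarrow> 'a" where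
  "comp_seq T 0 = id"
| "comp_seq T (Suc n) = T (Suc n) \<circ> comp_seq T n"

text \<open>Convergence in P^N of a sequence of points given by homogeneous coordinate
  vectors w n (coordinates indexed 1..N+1) to the point with homogeneous coordinates p:
  convergence in some standard affine chart {w_j \<noteq> 0} containing p.\<close>

definition proj_conv :: "nat \<Rightarrow> (nat \<Rightarrow> nat \<Rightarrow> complex) \<Rightarrow> (nat \<Rightarrow> complex) \<Rightarrow> bool" where
  "proj_conv N w p \<longleftrightarrow>
     (\<exists>j\<in>{1..N+1}. p j \<noteq> 0 \<and> (\<forall>\<^sub>F n in sequentially. w n j \<noteq> 0) \<and>
        (\<forall>i\<in>{1..N+1}. ((\<lambda>n. w n i / w n j) \<longlongrightarrow> p i / p j) sequentially))"

definition hom :: "nat \<Rightarrow> (nat \<Rightarrow> complex) \<Rightarrow> (nat \<Rightarrow> complex)" where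
  "hom k z = (\<lambda>i. if i = k + 1 then 1 else if i \<in> {1..k} then z i else 0)"

definition ek :: "nat \<Rightarrow> (nat \<Rightarrow> complex)" where
  "ek k = (\<lambda>i. if i = k then 1 else 0)"

definition escaping :: "nat \<Rightarrow> (nat \<Rightarrow> (nat \<Rightarrow> complex) \<Rightarrow> (nat \<Rightarrow> complex))
    \<Rightarrow> (nat \<Rightarrow> complex) set" where
  "escaping k T = {z \<in> Ck k. proj_conv k (\<lambda>n. hom k (comp_seq T n z)) (ek k)}"

definition green :: "nat \<Rightarrow> nat \<Rightarrow> (nat \<Rightarrow> (nat \<Rightarrow> complex) \<Rightarrow> (nat \<Rightarrow> complex))
    \<Rightarrow> (nat \<Rightarrow> complex) \<Rightarrow> real" where
  "green k d T z = (if z \<in> escaping k T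
      then lim (\<lambda>n. logplus (supnorm k (comp_seq T n z)) / real d ^ n) else 0)"

definition periodize :: "nat \<Rightarrow> (nat \<Rightarrow> 'a) \<Rightarrow> (nat \<Rightarrow> 'a)" where
  "periodize m T = (\<lambda>n. T ((n - 1) mod m + 1))"

end

theory Submission
  imports Defs
begin

text \<open>On the region V where |z_k| > R and lam |z_i| \<le> |z_k| for i < k, every map S_n
  behaves like z_k \<mapsto> z_k^d: it maps V into itself with |S(z)_k| \<ge> |z_k|^d / 2. Everywhere
  it grows at most like K |z|^d, and at a step whose image leaves V at most like B |z|^(d-1).
  With u_n = log max(1, |T(n) z|), the sequence (u_n + log K) / d^n is decreasing, and
  (u_n - log K) / d^n is increasing once the orbit has entered V; so G is within log K / d^n
  of u_n / d^n as soon as T(n) z \<in> V, while u_n / d^n \<le> ((d-1)/d)^n (u_0 + log B) if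
  T(n) z \<notin> V. The sequences S_n and s^m_n agree for n \<le> m, hence share u_m, and therefore
  |G - G_m| \<le> ((d-1)/d)^m (log max(1, |z|) + log B) + 2 log K / d^m, uniformly small on
  compact sets.\<close>

lemma supnorm_ge_coord: "i \<in> {1..k} \<Longrightarrow> norm (z i) \<le> supnorm k z"
  unfolding supnorm_def by (intro Max_ge) auto

lemma supnorm_le:
  assumes "1 \<le> k" "\<And>i. i \<in> {1..k} \<Longrightarrow> norm (z i) \<le> b"
  shows "supnorm k z \<le> b"
  using assms unfolding supnorm_def by (subst Max_le_iff) auto

lemma supnorm_nonneg: "1 \<le> k \<Longrightarrow> 0 \<le> supnorm k z"
  using order_trans[OF norm_ge_zero supnorm_ge_coord[of k k z]] by simp

lemma coord_le_max_supnorm: "i \<in> {1..k} \<Longrightarrow> norm (z i) \<le> max 1 (supnorm k z)"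
  using supnorm_ge_coord by (simp add: le_max_iff_disj)

lemma logplus_eq_ln_max: "0 \<le> s \<Longrightarrow> logplus s = ln (max 1 s)"
  unfolding logplus_def
  by (cases "s \<le> 1") (auto simp: max_def less_eq_real_def dest: ln_le_zero_iff[THEN iffD2])

lemma ln_max_le_of_bound:
  fixes x y c :: real
  assumes "1 \<le> c" "max 1 x \<le> c * max 1 y ^ e"
  shows "ln (max 1 x) \<le> real e * ln (max 1 y) + ln c"
proof -
  have "ln (max 1 x) \<le> ln (c * max 1 y ^ e)"
    using assms by (intro ln_mono) auto
  also have "\<dots> = real e * ln (max 1 y) + ln c"
    using assms(1) by (simp add: ln_mult ln_realpow)
  finally show ?thesis .
qed

lemma divide_power_Suc_le_iff:
  fixes c x y :: real
  assumes "0 < c"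
  shows "x / c ^ Suc n \<le> y / c ^ n \<longleftrightarrow> x \<le> c * y"
  using assms by (simp add: field_simps)

lemma le_divide_power_Suc_iff:
  fixes c x y :: real
  assumes "0 < c"
  shows "y / c ^ n \<le> x / c ^ Suc n \<longleftrightarrow> c * y \<le> x"
  using assms by (simp add: field_simps mult.commute)

lemma proj_conv_hom_ek:
  fixes w :: "nat \<Rightarrow> nat \<Rightarrow> complex"
  assumes "1 \<le> k" and nonzero: "\<forall>\<^sub>F n in sequentially. w n k \<noteq> 0"
    and inverse: "(\<lambda>n. 1 / w n k) \<longlonglongrightarrow> 0"
    and ratios: "\<And>i. i \<in> {1..k-1} \<Longrightarrow> (\<lambda>n. w n i / w n k) \<longlonglongrightarrow> 0"
  shows "proj_conv k (\<lambda>n. hom k (w n)) (ek k)"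
  unfolding proj_conv_def
proof (intro bexI[of _ k] conjI ballI)
  have hom_coord: "hom k v j = v j" if "j \<in> {1..k}" for v j using that by (simp add: hom_def)
  have hom_k: "hom k v k = v k" for v using assms(1) by (simp add: hom_coord)
  show "\<forall>\<^sub>F n in sequentially. hom k (w n) k \<noteq> 0"
    using nonzero by (simp add: hom_k)
  fix i assume i: "i \<in> {1..k+1}"
  consider "i = k" | "i = k+1" | "i \<in> {1..k-1}" using i by fastforce
  then show "((\<lambda>n. hom k (w n) i / hom k (w n) k) \<longlongrightarrow> ek k i / ek k k) sequentially"
  proof cases
    case 1
    have "\<forall>\<^sub>F n in sequentially. hom k (w n) i / hom k (w n) k = 1"
      using nonzero by eventually_elim (simp add: 1 hom_k)
    then show ?thesis by (simp add: 1 ek_def tendsto_eventually)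
  next
    case 2
    then show ?thesis using inverse by (simp add: hom_k ek_def) (simp add: hom_def)
  next
    case 3
    then have "i \<noteq> k" "i \<in> {1..k}" by auto
    then show ?thesis using ratios[OF 3] by (simp add: hom_k hom_coord ek_def)
  qed
qed (use assms(1) in \<open>auto simp: ek_def\<close>)

section \<open>Green functions of sequences with a filtration\<close>

type_synonym point = "nat \<Rightarrow> complex"

definition Vplus :: "nat \<Rightarrow> real \<Rightarrow> real \<Rightarrow> point \<Rightarrow> bool" where
  "Vplus k lam R z \<longleftrightarrow> R < norm (z k) \<and> (\<forall>i\<in>{1..k-1}. lam * norm (z i) \<le> norm (z k))"

lemma Vplus_coord_le:
  assumes "1 \<le> lam" "Vplus k lam R z" "i \<in> {1..k}"
  shows "norm (z i) \<le> norm (z k)"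
proof (cases "i = k")
  case False
  with assms(2,3) have "lam * norm (z i) \<le> norm (z k)" unfolding Vplus_def by auto
  moreover have "norm (z i) \<le> lam * norm (z i)" using assms(1) by (simp add: mult_le_cancel_right1)
  ultimately show ?thesis by linarith
qed simp

lemma Vplus_max_supnorm:
  assumes "1 \<le> k" "1 \<le> lam" "1 \<le> R" "Vplus k lam R z"
  shows "max 1 (supnorm k z) = norm (z k)"
proof -
  have "supnorm k z = norm (z k)"
    using assms Vplus_coord_le by (intro antisym supnorm_le supnorm_ge_coord) auto
  moreover have "1 < norm (z k)" using assms(3,4) unfolding Vplus_def by linarith
  ultimately show ?thesis by simp
qed

definition filtration_step ::
    "nat \<Rightarrow> nat \<Rightarrow> real \<Rightarrow> real \<Rightarrow> real \<Rightarrow> real \<Rightarrow> (point \<Rightarrow> point) \<Rightarrow> bool" where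
  "filtration_step k d lam R K B S \<longleftrightarrow>
     (\<forall>z. max 1 (supnorm k (S z)) \<le> K * max 1 (supnorm k z) ^ d) \<and>
     (\<forall>z. Vplus k lam R z \<longrightarrow> Vplus k lam R (S z) \<and>
        norm (z k) ^ d / 2 \<le> norm (S z k) \<and> 2 * norm (z k) \<le> norm (S z k) \<and>
        (\<forall>i\<in>{1..k-1}. norm (S z i) * norm (z k) \<le> 4 * norm (S z k))) \<and>
     (\<forall>z. \<not> Vplus k lam R (S z) \<longrightarrow>
        max 1 (supnorm k (S z)) \<le> B * max 1 (supnorm k z) ^ (d - 1))"

definition orbit_log :: "nat \<Rightarrow> (nat \<Rightarrow> point \<Rightarrow> point) \<Rightarrow> point \<Rightarrow> nat \<Rightarrow> real" where
  "orbit_log k T z n = ln (max 1 (supnorm k (comp_seq T n z)))"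

definition green_seq :: "nat \<Rightarrow> nat \<Rightarrow> (nat \<Rightarrow> point \<Rightarrow> point) \<Rightarrow> point \<Rightarrow> nat \<Rightarrow> real" where
  "green_seq k d T z n = orbit_log k T z n / real d ^ n"

lemma green_eq_if_escaping:
  assumes "1 \<le> k" "z \<in> escaping k T" "green_seq k d T z \<longlonglongrightarrow> L"
  shows "green k d T z = L"
proof -
  have "(\<lambda>n. logplus (supnorm k (comp_seq T n z)) / real d ^ n) = green_seq k d T z"
    using assms(1)
    by (intro ext) (simp add: green_seq_def orbit_log_def logplus_eq_ln_max supnorm_nonneg)
  then show ?thesis using assms(2) limI[OF assms(3)] unfolding green_def by presburger
qed

lemma green_eq_0_if_not_escaping: "z \<notin> escaping k T \<Longrightarrow> green k d T z = 0"
  unfolding green_def by simp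

locale filtration_sequence =
  fixes k d :: nat and lam R K B :: real
    and T :: "nat \<Rightarrow> point \<Rightarrow> point"
  assumes k1: "1 \<le> k" and d3: "3 \<le> d" and lam1: "1 \<le> lam" and R1: "1 \<le> R"
    and K2: "2 \<le> K" and B1: "1 \<le> B"
    and step: "\<And>n. 1 \<le> n \<Longrightarrow> filtration_step k d lam R K B (T n)"
begin

lemma step_Suc: "filtration_step k d lam R K B (T (Suc n))"
  using step by simp

lemma orbit_log_Suc_le: "orbit_log k T z (Suc n) \<le> real d * orbit_log k T z n + ln K"
  using step_Suc[of n] K2 unfolding filtration_step_def orbit_log_def
  by (intro ln_max_le_of_bound) auto

lemma orbit_log_Suc_le_exit:
  assumes "\<not> Vplus k lam R (comp_seq T (Suc n) z)"
  shows "orbit_log k T z (Suc n) \<le> real (d - 1) * orbit_log k T z n + ln B"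
  using step_Suc[of n] B1 assms unfolding filtration_step_def orbit_log_def
  by (intro ln_max_le_of_bound) auto

lemma Vplus_orbit_Suc:
  "Vplus k lam R (comp_seq T n z) \<Longrightarrow> Vplus k lam R (comp_seq T (Suc n) z)"
  using step_Suc[of n] unfolding filtration_step_def by simp

lemma Vplus_orbit_mono:
  assumes "Vplus k lam R (comp_seq T n z)" "n \<le> m"
  shows "Vplus k lam R (comp_seq T m z)"
  using assms(2) by (induction m rule: dec_induct) (use assms(1) Vplus_orbit_Suc in auto)

lemma orbit_log_eq_Vplus:
  "Vplus k lam R (comp_seq T n z) \<Longrightarrow> orbit_log k T z n = ln (norm (comp_seq T n z k))"
  unfolding orbit_log_def using Vplus_max_supnorm[OF k1 lam1 R1] by simp

lemma orbit_log_Suc_ge: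
  assumes V: "Vplus k lam R (comp_seq T n z)"
  shows "real d * orbit_log k T z n - ln K \<le> orbit_log k T z (Suc n)"
proof -
  define x where "x = comp_seq T n z"
  have x_k: "1 < norm (x k)" using V R1 unfolding Vplus_def x_def by simp
  have low: "norm (x k) ^ d / 2 \<le> norm (T (Suc n) x k)"
    using step_Suc[of n] V unfolding filtration_step_def x_def by blast
  have "0 < norm (x k)" using x_k by linarith
  then have "0 < norm (x k) ^ d / 2" by simp
  have "real d * ln (norm (x k)) - ln K \<le> ln (norm (x k) ^ d / 2)"
    using K2 x_k by (simp add: ln_div ln_realpow)
  also have "\<dots> \<le> ln (norm (T (Suc n) x k))"
    using low \<open>0 < norm (x k) ^ d / 2\<close> by (rule ln_mono)
  finally show ?thesis
    using orbit_log_eq_Vplus[OF V] orbit_log_eq_Vplus[OF Vplus_orbit_Suc[OF V]]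
    by (simp add: x_def)
qed

lemma orbit_log_le_exit:
  assumes "\<not> Vplus k lam R (comp_seq T m z)"
  shows "orbit_log k T z m + ln B \<le> real (d - 1) ^ m * (orbit_log k T z 0 + ln B)"
  using assms
proof (induction m)
  case (Suc m)
  have IH: "orbit_log k T z m + ln B \<le> real (d - 1) ^ m * (orbit_log k T z 0 + ln B)"
    using Suc Vplus_orbit_Suc by blast
  have "2 * ln B \<le> real (d - 1) * ln B" using d3 B1 by (intro mult_right_mono) auto
  then have "orbit_log k T z (Suc m) + ln B \<le> real (d - 1) * (orbit_log k T z m + ln B)"
    using orbit_log_Suc_le_exit[OF Suc.prems] by (simp add: algebra_simps)
  also have "\<dots> \<le> real (d - 1) * (real (d - 1) ^ m * (orbit_log k T z 0 + ln B))"
    using IH by (intro mult_left_mono) auto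
  finally show ?case by simp
qed simp

lemma green_seq_upper_Suc:
  "green_seq k d T z (Suc n) + ln K / real d ^ Suc n \<le> green_seq k d T z n + ln K / real d ^ n"
proof -
  have "2 * ln K \<le> real d * ln K" using d3 K2 by (intro mult_right_mono) auto
  then have "orbit_log k T z (Suc n) + ln K \<le> real d * (orbit_log k T z n + ln K)"
    using orbit_log_Suc_le[of z n] by (simp add: algebra_simps)
  then show ?thesis
    using d3 unfolding green_seq_def add_divide_distrib[symmetric]
    by (intro divide_power_Suc_le_iff[THEN iffD2]) auto
qed

lemma green_seq_lower_Suc:
  assumes "Vplus k lam R (comp_seq T n z)"
  shows "green_seq k d T z n - ln K / real d ^ n
    \<le> green_seq k d T z (Suc n) - ln K / real d ^ Suc n"
proof -
  have "2 * ln K \<le> real d * ln K" using d3 K2 by (intro mult_right_mono) auto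
  then have "real d * (orbit_log k T z n - ln K) \<le> orbit_log k T z (Suc n) - ln K"
    using orbit_log_Suc_ge[OF assms] by (simp add: algebra_simps)
  then show ?thesis
    using d3 unfolding green_seq_def diff_divide_distrib[symmetric]
    by (intro le_divide_power_Suc_iff[THEN iffD2]) auto
qed

lemma green_seq_nonneg: "0 \<le> green_seq k d T z n"
  unfolding green_seq_def orbit_log_def by simp

lemma green_seq_convergent_upper:
  obtains L
  where "green_seq k d T z \<longlonglongrightarrow> L" "\<And>m. L \<le> green_seq k d T z m + ln K / real d ^ m"
proof -
  define upper where "upper n = green_seq k d T z n + ln K / real d ^ n" for n
  have "antimono upper"
    unfolding upper_def by (intro decseq_SucI green_seq_upper_Suc)
  moreover have "0 \<le> upper n" for n
    unfolding upper_def using green_seq_nonneg d3 K2 by (intro add_nonneg_nonneg) auto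
  ultimately obtain L where L: "upper \<longlonglongrightarrow> L" "\<And>m. L \<le> upper m"
    using decseq_convergent by blast
  have "(\<lambda>n. upper n - ln K / real d ^ n) \<longlonglongrightarrow> L - 0"
    using d3 by (intro tendsto_diff L(1) LIMSEQ_divide_realpow_zero) auto
  then show ?thesis using that L(2) unfolding upper_def by simp
qed

lemma green_nonneg: "0 \<le> green k d T z"
proof -
  obtain L where L: "green_seq k d T z \<longlonglongrightarrow> L" using green_seq_convergent_upper by blast
  then have "0 \<le> L"
    by (rule tendsto_lowerbound) (simp_all add: green_seq_nonneg always_eventually)
  then show ?thesis
    by (cases "z \<in> escaping k T")
      (simp_all add: green_eq_if_escaping[OF k1 _ L] green_eq_0_if_not_escaping)
qed

lemma green_le_upper: "green k d T z \<le> green_seq k d T z m + ln K / real d ^ m"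
proof -
  obtain L where L: "green_seq k d T z \<longlonglongrightarrow> L"
    and upper: "\<And>m. L \<le> green_seq k d T z m + ln K / real d ^ m"
    using green_seq_convergent_upper by blast
  have "0 \<le> green_seq k d T z m + ln K / real d ^ m"
    using green_seq_nonneg d3 K2 by (intro add_nonneg_nonneg) auto
  then show ?thesis
    using upper[of m] by (cases "z \<in> escaping k T")
      (simp_all add: green_eq_if_escaping[OF k1 _ L] green_eq_0_if_not_escaping)
qed

lemma orbit_last_coord_growth:
  assumes "Vplus k lam R (comp_seq T n0 z)"
  shows "2 ^ n * R \<le> norm (comp_seq T (n0 + n) z k)"
proof (induction n)
  case 0
  then show ?case using assms unfolding Vplus_def by simp
next
  case (Suc n)
  have "2 * norm (comp_seq T (n0 + n) z k) \<le> norm (comp_seq T (Suc (n0 + n)) z k)"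
    using step_Suc[of "n0 + n"] Vplus_orbit_mono[OF assms, of "n0 + n"]
    unfolding filtration_step_def by simp
  then show ?case using Suc by simp
qed

lemma inverse_last_coord_tendsto_zero:
  assumes "Vplus k lam R (comp_seq T n0 z)"
  shows "(\<lambda>n. 1 / norm (comp_seq T n z k)) \<longlonglongrightarrow> 0"
proof (rule LIMSEQ_offset[where k = n0], rule Lim_null_comparison)
  show "(\<lambda>n. (1 / R) / 2 ^ n) \<longlonglongrightarrow> 0" by (rule LIMSEQ_divide_realpow_zero) simp
  have "1 / norm (comp_seq T (n + n0) z k) \<le> 1 / (2 ^ n * R)" for n
    using le_imp_inverse_le[OF orbit_last_coord_growth[OF assms, of n]] R1
    by (simp add: add.commute inverse_eq_divide)
  then show "\<forall>\<^sub>F n in sequentially. norm (1 / norm (comp_seq T (n + n0) z k)) \<le> (1 / R) / 2 ^ n"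
    by (simp add: mult.commute)
qed

lemma orbit_coord_ratio_tendsto_zero:
  assumes V: "Vplus k lam R (comp_seq T n0 z)" and i: "i \<in> {1..k-1}"
  shows "(\<lambda>n. comp_seq T n z i / comp_seq T n z k) \<longlonglongrightarrow> 0"
proof (rule LIMSEQ_imp_Suc, rule Lim_null_comparison)
  show "(\<lambda>n. 4 * (1 / norm (comp_seq T n z k))) \<longlonglongrightarrow> 0"
    using tendsto_mult_right_zero[OF inverse_last_coord_tendsto_zero[OF V]] by simp
  show "\<forall>\<^sub>F n in sequentially.
      norm (comp_seq T (Suc n) z i / comp_seq T (Suc n) z k) \<le> 4 * (1 / norm (comp_seq T n z k))"
    unfolding eventually_sequentially
  proof (intro exI[of _ n0] allI impI)
    fix n assume "n0 \<le> n"
    then have Vn: "Vplus k lam R (comp_seq T n z)" by (rule Vplus_orbit_mono[OF V])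
    then have "norm (comp_seq T (Suc n) z i) * norm (comp_seq T n z k)
        \<le> 4 * norm (comp_seq T (Suc n) z k)"
      using step_Suc[of n] i unfolding filtration_step_def by simp
    moreover have "0 < norm (comp_seq T n z k)" "0 < norm (comp_seq T (Suc n) z k)"
      using Vn Vplus_orbit_Suc[OF Vn] R1 unfolding Vplus_def by auto
    ultimately show "norm (comp_seq T (Suc n) z i / comp_seq T (Suc n) z k)
        \<le> 4 * (1 / norm (comp_seq T n z k))"
      by (simp add: norm_divide divide_simps mult.commute)
  qed
qed

lemma escaping_if_Vplus:
  assumes "z \<in> Ck k" and V: "Vplus k lam R (comp_seq T n0 z)"
  shows "z \<in> escaping k T"
proof -
  have "comp_seq T n z k \<noteq> 0" if "n0 \<le> n" for n
    using Vplus_orbit_mono[OF V that] R1 unfolding Vplus_def by auto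
  then have nonzero: "\<forall>\<^sub>F n in sequentially. comp_seq T n z k \<noteq> 0"
    by (rule eventually_sequentiallyI)
  have "(\<lambda>n. norm (1 / comp_seq T n z k)) \<longlonglongrightarrow> 0"
    using inverse_last_coord_tendsto_zero[OF V] by (simp add: norm_divide)
  then have inverse: "(\<lambda>n. 1 / comp_seq T n z k) \<longlonglongrightarrow> 0"
    by (rule tendsto_norm_zero_cancel)
  have "proj_conv k (\<lambda>n. hom k (comp_seq T n z)) (ek k)"
    using proj_conv_hom_ek[where w = "\<lambda>n. comp_seq T n z"] k1 nonzero inverse
      orbit_coord_ratio_tendsto_zero[OF V] by blast
  then show ?thesis using assms(1) unfolding escaping_def by simp
qed

lemma green_ge_lower:
  assumes "z \<in> Ck k" and V: "Vplus k lam R (comp_seq T m z)"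
  shows "green_seq k d T z m - ln K / real d ^ m \<le> green k d T z"
proof -
  obtain L where L: "green_seq k d T z \<longlonglongrightarrow> L" using green_seq_convergent_upper by blast
  have lower: "(\<lambda>n. green_seq k d T z n - ln K / real d ^ n) \<longlonglongrightarrow> L - 0"
    using d3 by (intro tendsto_diff L LIMSEQ_divide_realpow_zero) auto
  have "green_seq k d T z m - ln K / real d ^ m \<le> green_seq k d T z n - ln K / real d ^ n"
    if "m \<le> n" for n
    using that
  proof (induction n rule: dec_induct)
    case (step n)
    then show ?case using green_seq_lower_Suc[OF Vplus_orbit_mono[OF V step(1)]] by linarith
  qed simp
  then have "green_seq k d T z m - ln K / real d ^ m \<le> L - 0"
    by (intro tendsto_lowerbound[OF lower] eventually_sequentiallyI) auto
  then show ?thesis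
    using green_eq_if_escaping[OF k1 escaping_if_Vplus[OF assms] L] by simp
qed

end

lemma green_diff_le_if_orbits_agree:
  assumes T: "filtration_sequence k d lam R K B T" and T': "filtration_sequence k d lam R K B T'"
    and z: "z \<in> Ck k" "supnorm k z \<le> M" and agree: "comp_seq T m z = comp_seq T' m z"
  shows "\<bar>green k d T z - green k d T' z\<bar>
           \<le> (real (d - 1) / real d) ^ m * (ln (max 1 M) + ln B) + 2 * ln K / real d ^ m"
proof -
  interpret T: filtration_sequence k d lam R K B T by (fact T)
  interpret T': filtration_sequence k d lam R K B T' by (fact T')
  define c where "c = ln K / real d ^ m"
  define e where "e = (real (d - 1) / real d) ^ m * (ln (max 1 M) + ln B)"
  have same: "green_seq k d T' z m = green_seq k d T z m"
    unfolding green_seq_def orbit_log_def agree ..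
  have "0 \<le> c" using T.K2 by (simp add: c_def)
  have "0 \<le> e" using T.B1 by (simp add: e_def)
  have upper: "green k d T z \<le> green_seq k d T z m + c" "green k d T' z \<le> green_seq k d T z m + c"
    using T.green_le_upper[of z m] T'.green_le_upper[of z m] same by (simp_all add: c_def)
  have "\<bar>green k d T z - green k d T' z\<bar> \<le> e + 2 * c"
  proof (cases "Vplus k lam R (comp_seq T m z)")
    case True
    have V': "Vplus k lam R (comp_seq T' m z)" using True by (simp add: agree)
    have "green_seq k d T z m - c \<le> green k d T z" "green_seq k d T z m - c \<le> green k d T' z"
      using T.green_ge_lower[OF z(1) True] T'.green_ge_lower[OF z(1) V'] same
      by (simp_all add: c_def)
    then show ?thesis using upper \<open>0 \<le> e\<close> by (simp add: abs_le_iff)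
  next
    case False
    have "orbit_log k T z 0 \<le> ln (max 1 M)"
      using z(2) by (simp add: orbit_log_def)
    then have "real (d - 1) ^ m * (orbit_log k T z 0 + ln B)
        \<le> real (d - 1) ^ m * (ln (max 1 M) + ln B)"
      by (intro mult_left_mono) auto
    moreover have "0 \<le> ln B" using T.B1 by simp
    ultimately have "orbit_log k T z m \<le> real (d - 1) ^ m * (ln (max 1 M) + ln B)"
      using T.orbit_log_le_exit[OF False] by linarith
    then have "green_seq k d T z m \<le> e"
      using T.d3 unfolding green_seq_def e_def power_divide by (simp add: divide_right_mono)
    then show ?thesis
      using upper T.green_nonneg[of z] T'.green_nonneg[of z] \<open>0 \<le> c\<close> by (simp add: abs_le_iff)
  qed
  then show ?thesis by (simp add: c_def e_def)
qed

lemma comp_seq_periodize: "n \<le> m \<Longrightarrow> comp_seq (periodize m T) n = comp_seq T n"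
proof (induction n)
  case (Suc n)
  then have "periodize m T (Suc n) = T (Suc n)" by (simp add: periodize_def)
  then show ?case using Suc by simp
qed simp

lemma filtration_sequence_periodize:
  "filtration_sequence k d lam R K B T \<Longrightarrow> filtration_sequence k d lam R K B (periodize m T)"
  unfolding filtration_sequence_def periodize_def by simp

lemma compact_supnorm_bounded:
  assumes "1 \<le> k" "compact C"
  obtains M where "\<And>z. z \<in> C \<Longrightarrow> supnorm k z \<le> M"
proof -
  have "compact (\<Union>i\<in>{1..k}. (\<lambda>z. z i) ` C)"
    by (intro compact_UN finite_atLeastAtMost compact_continuous_image
        continuous_on_subset[OF continuous_on_product_coordinates] assms(2)) auto
  then obtain M where "\<forall>x\<in>(\<Union>i\<in>{1..k}. (\<lambda>z. z i) ` C). norm x \<le> M"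
    using compact_imp_bounded bounded_iff by metis
  then show ?thesis using assms(1) by (intro that supnorm_le) auto
qed

section \<open>Perturbed weak shifts\<close>

lemma norm_poly_p_le:
  assumes "\<forall>i\<in>midx k dt. norm (\<alpha> i) \<le> Mt" "\<forall>i\<in>midx k dt. mdeg k i > dt \<longrightarrow> \<alpha> i = 0"
    and "\<And>j. j \<in> {2..k} \<Longrightarrow> norm (z j) \<le> L" "1 \<le> L"
  shows "norm (poly_p k dt \<alpha> z) \<le> real (card (midx k dt)) * Mt * L ^ dt"
proof -
  have "norm (\<alpha> i * (\<Prod>j=2..k. z j ^ i j)) \<le> Mt * L ^ dt" if i: "i \<in> midx k dt" for i
  proof (cases "mdeg k i > dt")
    case True
    then show ?thesis using assms(1,2,4) i by (auto intro: order_trans[OF norm_ge_zero])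
  next
    case False
    have "norm (\<Prod>j=2..k. z j ^ i j) = (\<Prod>j=2..k. norm (z j) ^ i j)"
      by (simp add: prod_norm[symmetric] norm_power)
    also have "\<dots> \<le> (\<Prod>j=2..k. L ^ i j)"
      by (intro prod_mono conjI power_mono assms(3)) auto
    also have "\<dots> = L ^ mdeg k i" unfolding mdeg_def by (simp add: power_sum)
    also have "\<dots> \<le> L ^ dt" using False assms(4) by (intro power_increasing) auto
    finally show ?thesis
      unfolding norm_mult using assms(1) i
      by (intro mult_mono) (auto intro: order_trans[OF norm_ge_zero])
  qed
  then have "norm (poly_p k dt \<alpha> z) \<le> (\<Sum>i\<in>midx k dt. Mt * L ^ dt)"
    unfolding poly_p_def by (intro order_trans[OF norm_sum] sum_mono)
  then show ?thesis by simp
qed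

lemma norm_sum_power_le:
  fixes z :: "nat \<Rightarrow> complex"
  assumes "\<And>j. j \<in> A \<Longrightarrow> norm (z j) \<le> L"
  shows "norm (\<Sum>i\<in>A. z i ^ d) \<le> real (card A) * L ^ d"
proof -
  have "norm (\<Sum>i\<in>A. z i ^ d) \<le> (\<Sum>i\<in>A. norm (z i) ^ d)"
    by (rule order_trans[OF norm_sum]) (simp add: norm_power)
  also have "\<dots> \<le> (\<Sum>i\<in>A. L ^ d)" by (intro sum_mono power_mono assms) auto
  finally show ?thesis by simp
qed

lemma pws_coord_shift: "j \<in> {1..k-2} \<Longrightarrow> pws k d dt a \<alpha> z j = z (j + 1)"
  unfolding pws_def by auto

lemma pws_coord_penultimate: "3 \<le> k \<Longrightarrow> pws k d dt a \<alpha> z (k - 1) = z k + z 2 ^ (d - 1)"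
  unfolding pws_def by auto

lemma pws_coord_last:
  "3 \<le> k \<Longrightarrow> pws k d dt a \<alpha> z k = a * z 1 + poly_p k dt \<alpha> z + (\<Sum>i=2..k. z i ^ d)"
  unfolding pws_def by auto

text \<open>The constants are chosen so that on V both the middle powers z_2^d + ... + z_(k-1)^d
  and the affine part a z_1 + p(z) of the last coordinate have modulus at most |z_k|^d / 4.\<close>

definition pws_coeff_bound :: "nat \<Rightarrow> nat \<Rightarrow> real \<Rightarrow> real" where
  "pws_coeff_bound k dt Mt = real (card (midx k dt)) * Mt"

definition pws_lam :: "nat \<Rightarrow> real" where
  "pws_lam k = 4 * real k"

definition pws_radius :: "nat \<Rightarrow> nat \<Rightarrow> real \<Rightarrow> real" where
  "pws_radius k dt Mt = 4 * pws_lam k + 4 * (Mt + pws_coeff_bound k dt Mt) + 4"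

definition pws_growth :: "nat \<Rightarrow> nat \<Rightarrow> real \<Rightarrow> real" where
  "pws_growth k dt Mt = 2 + Mt + pws_coeff_bound k dt Mt + real k"

definition pws_exit :: "nat \<Rightarrow> nat \<Rightarrow> real \<Rightarrow> real" where
  "pws_exit k dt Mt = 2 * pws_lam k * pws_radius k dt Mt"

lemma pws_constants_ge:
  assumes "3 \<le> k" "0 \<le> Mt"
  shows "12 \<le> pws_lam k" "1 \<le> pws_radius k dt Mt"
    and "2 \<le> pws_growth k dt Mt" "1 \<le> pws_exit k dt Mt"
proof -
  have Q: "0 \<le> pws_coeff_bound k dt Mt" using assms(2) by (simp add: pws_coeff_bound_def)
  show lam: "12 \<le> pws_lam k" using assms(1) by (simp add: pws_lam_def)
  show R: "1 \<le> pws_radius k dt Mt" using lam Q assms(2) by (simp add: pws_radius_def)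
  show "2 \<le> pws_growth k dt Mt" using Q assms(2) by (simp add: pws_growth_def)
  show "1 \<le> pws_exit k dt Mt"
    using mult_mono[OF _ R, of 1 "2 * pws_lam k"] lam by (simp add: pws_exit_def)
qed

context
  fixes k d dt :: nat and a :: complex and \<alpha> :: "(nat \<Rightarrow> nat) \<Rightarrow> complex" and Mt :: real
  assumes k3: "3 \<le> k" and dt1: "1 \<le> dt" and dtd: "dt + 2 \<le> d" and Mt0: "0 \<le> Mt"
    and a_le: "norm a \<le> Mt" and \<alpha>_le: "\<forall>i\<in>midx k dt. norm (\<alpha> i) \<le> Mt"
    and \<alpha>_deg: "\<forall>i\<in>midx k dt. mdeg k i > dt \<longrightarrow> \<alpha> i = 0"
begin

lemma pws_coeff_bound_nonneg: "0 \<le> pws_coeff_bound k dt Mt"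
  using Mt0 by (simp add: pws_coeff_bound_def)

lemma norm_pws_coord_le:
  assumes z: "\<And>j. j \<in> {1..k} \<Longrightarrow> norm (z j) \<le> L" and "1 \<le> L" and j: "j \<in> {1..k-1}"
  shows "norm (pws k d dt a \<alpha> z j) \<le> 2 * L ^ (d - 1)"
proof -
  have "L \<le> L ^ (d - 1)" using \<open>1 \<le> L\<close> dtd power_increasing[of 1 "d - 1" L] by simp
  show ?thesis
  proof (cases "j = k - 1")
    case True
    then have "pws k d dt a \<alpha> z j = z k + z 2 ^ (d - 1)" using pws_coord_penultimate[OF k3] by simp
    have "norm (z k + z 2 ^ (d - 1)) \<le> norm (z k) + norm (z 2) ^ (d - 1)"
      by (metis norm_power norm_triangle_ineq)
    also have "\<dots> \<le> L + L ^ (d - 1)" using z[of k] z[of 2] k3 by (intro add_mono power_mono) auto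
    finally show ?thesis using \<open>pws k d dt a \<alpha> z j = _\<close> \<open>L \<le> L ^ (d - 1)\<close> by simp
  next
    case False
    then have "j \<in> {1..k-2}" using j by auto
    then have "pws k d dt a \<alpha> z j = z (j + 1)" by (rule pws_coord_shift)
    moreover have "norm (z (j + 1)) \<le> L" using z[of "j + 1"] j by auto
    ultimately show ?thesis using \<open>L \<le> L ^ (d - 1)\<close> \<open>1 \<le> L\<close> by simp
  qed
qed

lemma norm_affine_part_le:
  assumes z: "\<And>j. j \<in> {1..k} \<Longrightarrow> norm (z j) \<le> L" and "1 \<le> L"
  shows "norm (a * z 1 + poly_p k dt \<alpha> z) \<le> (Mt + pws_coeff_bound k dt Mt) * L ^ (d - 2)"
proof -
  have "L ^ 1 \<le> L ^ (d - 2)" "L ^ dt \<le> L ^ (d - 2)"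
    using \<open>1 \<le> L\<close> dtd dt1 by (intro power_increasing; simp)+
  have "norm (a * z 1) \<le> Mt * L ^ (d - 2)"
    unfolding norm_mult using a_le z[of 1] k3 \<open>L ^ 1 \<le> L ^ (d - 2)\<close> Mt0
    by (intro mult_mono) auto
  moreover have "norm (poly_p k dt \<alpha> z) \<le> pws_coeff_bound k dt Mt * L ^ dt"
    using norm_poly_p_le[OF \<alpha>_le \<alpha>_deg, of z L] z \<open>1 \<le> L\<close>
    unfolding pws_coeff_bound_def by auto
  moreover have "pws_coeff_bound k dt Mt * L ^ dt \<le> pws_coeff_bound k dt Mt * L ^ (d - 2)"
    using \<open>L ^ dt \<le> L ^ (d - 2)\<close> pws_coeff_bound_nonneg by (rule mult_left_mono)
  ultimately show ?thesis
    using norm_triangle_ineq[of "a * z 1" "poly_p k dt \<alpha> z"] by (simp add: distrib_right)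
qed

lemma pws_growth_bound:
  "max 1 (supnorm k (pws k d dt a \<alpha> z)) \<le> pws_growth k dt Mt * max 1 (supnorm k z) ^ d"
proof -
  define L where "L = max 1 (supnorm k z)"
  have "1 \<le> L" by (simp add: L_def)
  have z: "\<And>j. j \<in> {1..k} \<Longrightarrow> norm (z j) \<le> L" unfolding L_def by (rule coord_le_max_supnorm)
  have L_pow: "L ^ (d - 1) \<le> L ^ d" "L ^ (d - 2) \<le> L ^ d" "1 \<le> L ^ d"
    using \<open>1 \<le> L\<close> by (auto intro: power_increasing)
  have Q: "0 \<le> pws_coeff_bound k dt Mt" by (rule pws_coeff_bound_nonneg)
  have "norm (pws k d dt a \<alpha> z j) \<le> pws_growth k dt Mt * L ^ d" if j: "j \<in> {1..k}" for j
  proof (cases "j = k")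
    case False
    then have "norm (pws k d dt a \<alpha> z j) \<le> 2 * L ^ (d - 1)"
      using norm_pws_coord_le[OF z \<open>1 \<le> L\<close>] j by auto
    also have "\<dots> \<le> pws_growth k dt Mt * L ^ d"
      using L_pow Mt0 Q \<open>1 \<le> L\<close> unfolding pws_growth_def by (intro mult_mono) auto
    finally show ?thesis .
  next
    case True
    have "norm (pws k d dt a \<alpha> z j)
        \<le> norm (a * z 1 + poly_p k dt \<alpha> z) + norm (\<Sum>i=2..k. z i ^ d)"
      using True k3 by (simp add: pws_coord_last norm_triangle_ineq)
    also have "\<dots> \<le> (Mt + pws_coeff_bound k dt Mt) * L ^ (d - 2) + real (card {2..k}) * L ^ d"
      using norm_affine_part_le[OF z \<open>1 \<le> L\<close>] norm_sum_power_le[of "{2..k}" z L] z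
      by (intro add_mono) auto
    also have "\<dots> \<le> (Mt + pws_coeff_bound k dt Mt) * L ^ d + real k * L ^ d"
      using L_pow Mt0 Q \<open>1 \<le> L\<close> by (intro add_mono mult_mono) auto
    also have "\<dots> \<le> pws_growth k dt Mt * L ^ d"
      using L_pow unfolding pws_growth_def by (simp add: algebra_simps)
    finally show ?thesis .
  qed
  then have "supnorm k (pws k d dt a \<alpha> z) \<le> pws_growth k dt Mt * L ^ d"
    using k3 by (intro supnorm_le) auto
  moreover have "1 * 1 \<le> pws_growth k dt Mt * L ^ d"
    using pws_constants_ge(3)[OF k3 Mt0, of dt] L_pow(3) by (intro mult_mono) auto
  ultimately show ?thesis unfolding L_def[symmetric] by simp
qed

lemma pws_last_coord_split:
  "pws k d dt a \<alpha> z k = z k ^ d + ((a * z 1 + poly_p k dt \<alpha> z) + (\<Sum>i=2..k-1. z i ^ d))"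
proof -
  have "{2..k} = insert k {2..k-1}" using k3 by auto
  then have "(\<Sum>i=2..k. z i ^ d) = z k ^ d + (\<Sum>i=2..k-1. z i ^ d)" using k3 by simp
  then show ?thesis using k3 by (simp add: pws_coord_last algebra_simps)
qed

lemma Vplus_pws_bounds:
  assumes "Vplus k (pws_lam k) (pws_radius k dt Mt) z"
  shows "\<And>j. j \<in> {1..k} \<Longrightarrow> norm (z j) \<le> norm (z k)"
    and "\<And>j. j \<in> {1..k-1} \<Longrightarrow> norm (z j) \<le> norm (z k) / pws_lam k"
    and "4 * pws_lam k \<le> norm (z k)" "4 * (Mt + pws_coeff_bound k dt Mt) \<le> norm (z k)"
    and "1 \<le> norm (z k)"
proof -
  have lam: "12 \<le> pws_lam k" by (rule pws_constants_ge(1)[OF k3 Mt0])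
  show "\<And>j. j \<in> {1..k} \<Longrightarrow> norm (z j) \<le> norm (z k)"
    using lam assms by (intro Vplus_coord_le) auto
  show "\<And>j. j \<in> {1..k-1} \<Longrightarrow> norm (z j) \<le> norm (z k) / pws_lam k"
    using assms lam unfolding Vplus_def by (auto simp: field_simps)
  have R: "pws_radius k dt Mt < norm (z k)" using assms unfolding Vplus_def by simp
  show "4 * pws_lam k \<le> norm (z k)"
    using R lam pws_coeff_bound_nonneg Mt0 unfolding pws_radius_def distrib_left by linarith
  show "4 * (Mt + pws_coeff_bound k dt Mt) \<le> norm (z k)"
    using R lam pws_coeff_bound_nonneg Mt0 unfolding pws_radius_def distrib_left by linarith
  show "1 \<le> norm (z k)"
    using R lam pws_coeff_bound_nonneg Mt0 unfolding pws_radius_def distrib_left by linarith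
qed

lemma pws_last_coord_ge_Vplus:
  assumes V: "Vplus k (pws_lam k) (pws_radius k dt Mt) z"
  shows "norm (z k) ^ d / 2 \<le> norm (pws k d dt a \<alpha> z k)"
proof -
  define L where "L = norm (z k)"
  define lam where "lam = pws_lam k"
  note bounds = Vplus_pws_bounds[OF V, folded L_def lam_def]
  have lam: "12 \<le> lam" unfolding lam_def by (rule pws_constants_ge(1)[OF k3 Mt0])
  have "lam \<le> lam ^ d" using power_increasing[of 1 d lam] lam dtd by simp
  then have "(L / lam) ^ d \<le> L ^ d / lam"
    unfolding power_divide using lam bounds(5) by (intro divide_left_mono) auto
  have "norm (\<Sum>i=2..k-1. z i ^ d) \<le> real (card {2..k-1}) * (L / lam) ^ d"
    using bounds(2) by (intro norm_sum_power_le) auto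
  also have "\<dots> \<le> real k * (L ^ d / lam)"
    using \<open>(L / lam) ^ d \<le> L ^ d / lam\<close> lam bounds(5) by (intro mult_mono) auto
  also have "\<dots> = L ^ d / 4" using k3 by (simp add: lam_def pws_lam_def)
  finally have middle: "norm (\<Sum>i=2..k-1. z i ^ d) \<le> L ^ d / 4" .
  have "4 * ((Mt + pws_coeff_bound k dt Mt) * L ^ (d - 2))
      = (4 * (Mt + pws_coeff_bound k dt Mt)) * L ^ (d - 2)"
    by simp
  also have "\<dots> \<le> L * L ^ (d - 2)"
    using bounds(4,5) by (intro mult_right_mono) auto
  also have "\<dots> \<le> L ^ d"
    using power_increasing[of "Suc (d - 2)" d L] bounds(5) dtd by simp
  finally have affine: "norm (a * z 1 + poly_p k dt \<alpha> z) \<le> L ^ d / 4"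
    using norm_affine_part_le[where z = z and L = L, OF bounds(1) bounds(5)] by linarith
  have "norm (z k ^ d) - norm ((a * z 1 + poly_p k dt \<alpha> z) + (\<Sum>i=2..k-1. z i ^ d))
      \<le> norm (pws k d dt a \<alpha> z k)"
    unfolding pws_last_coord_split by (rule norm_diff_ineq)
  moreover have "norm ((a * z 1 + poly_p k dt \<alpha> z) + (\<Sum>i=2..k-1. z i ^ d)) \<le> L ^ d / 2"
    using norm_triangle_ineq[of "a * z 1 + poly_p k dt \<alpha> z" "\<Sum>i=2..k-1. z i ^ d"] middle affine
    by linarith
  ultimately show ?thesis unfolding L_def norm_power by linarith
qed

lemma pws_Vplus:
  assumes V: "Vplus k (pws_lam k) (pws_radius k dt Mt) z"
  shows "Vplus k (pws_lam k) (pws_radius k dt Mt) (pws k d dt a \<alpha> z)"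
    and "2 * norm (z k) \<le> norm (pws k d dt a \<alpha> z k)"
    and "\<And>i. i \<in> {1..k-1} \<Longrightarrow> norm (pws k d dt a \<alpha> z i) * norm (z k) \<le> 4 * norm (pws k d dt a \<alpha> z k)"
proof -
  define L where "L = norm (z k)"
  define P where "P = L ^ (d - 1)"
  note bounds = Vplus_pws_bounds[OF V, folded L_def]
  have L_d: "L ^ d = L * P" unfolding P_def using dtd by (cases d) auto
  have "L ^ d / 2 \<le> norm (pws k d dt a \<alpha> z k)"
    using pws_last_coord_ge_Vplus[OF V] by (simp add: L_def)
  then have low: "L * P / 2 \<le> norm (pws k d dt a \<alpha> z k)" unfolding L_d .
  have other: "norm (pws k d dt a \<alpha> z i) \<le> 2 * P" if "i \<in> {1..k-1}" for i
    unfolding P_def using norm_pws_coord_le[where z = z and L = L, OF bounds(1) bounds(5) that] .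
  have "4 * pws_lam k * P \<le> L * P"
    using bounds(3,5) by (intro mult_right_mono) (auto simp: P_def)
  then have lam_other: "pws_lam k * (2 * P) \<le> L * P / 2" by simp
  have "L ^ 1 \<le> L ^ (d - 1)" using bounds(5) dtd by (intro power_increasing) auto
  then have "4 \<le> P" using bounds(3) pws_constants_ge(1)[OF k3 Mt0] by (simp add: P_def)
  then have "4 * L \<le> L * P" using bounds(5) by (simp add: mult.commute)
  then show twice: "2 * L \<le> norm (pws k d dt a \<alpha> z k)" using low by linarith
  show "Vplus k (pws_lam k) (pws_radius k dt Mt) (pws k d dt a \<alpha> z)"
    unfolding Vplus_def
  proof (intro conjI ballI)
    show "pws_radius k dt Mt < norm (pws k d dt a \<alpha> z k)"
      using V twice bounds(5) unfolding Vplus_def L_def by linarith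
    fix i assume "i \<in> {1..k-1}"
    then have "pws_lam k * norm (pws k d dt a \<alpha> z i) \<le> pws_lam k * (2 * P)"
      using other pws_constants_ge(1)[OF k3 Mt0] by (intro mult_left_mono) auto
    then show "pws_lam k * norm (pws k d dt a \<alpha> z i) \<le> norm (pws k d dt a \<alpha> z k)"
      using lam_other low by linarith
  qed
  fix i assume "i \<in> {1..k-1}"
  then have "norm (pws k d dt a \<alpha> z i) * L \<le> 2 * P * L"
    using other bounds(5) by (intro mult_right_mono) auto
  also have "\<dots> = 2 * (L * P)" by (simp add: ac_simps)
  finally show "norm (pws k d dt a \<alpha> z i) * norm (z k) \<le> 4 * norm (pws k d dt a \<alpha> z k)"
    using low unfolding L_def by linarith
qed

lemma pws_exit_bound:
  assumes exit: "\<not> Vplus k (pws_lam k) (pws_radius k dt Mt) (pws k d dt a \<alpha> z)"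
  shows "max 1 (supnorm k (pws k d dt a \<alpha> z)) \<le> pws_exit k dt Mt * max 1 (supnorm k z) ^ (d - 1)"
proof -
  define L where "L = max 1 (supnorm k z)"
  define P where "P = L ^ (d - 1)"
  define lam where "lam = pws_lam k"
  define R where "R = pws_radius k dt Mt"
  have "1 \<le> L" by (simp add: L_def)
  have z: "\<And>j. j \<in> {1..k} \<Longrightarrow> norm (z j) \<le> L" unfolding L_def by (rule coord_le_max_supnorm)
  have other: "norm (pws k d dt a \<alpha> z j) \<le> 2 * P" if "j \<in> {1..k-1}" for j
    unfolding P_def using norm_pws_coord_le[OF z \<open>1 \<le> L\<close> that] .
  have lam: "1 \<le> lam" and R: "1 \<le> R" and P: "1 \<le> P"
    using pws_constants_ge[OF k3 Mt0] \<open>1 \<le> L\<close> by (simp_all add: lam_def R_def P_def)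
  have "1 * 1 \<le> lam * P" using lam P by (intro mult_mono) auto
  then have R_le: "R \<le> 2 * lam * R * P"
    using mult_left_mono[of 1 "2 * lam * P" R] R by (simp add: algebra_simps)
  have "lam * (2 * P) * 1 \<le> lam * (2 * P) * R" using R lam P by (intro mult_left_mono) auto
  then have lam_le: "lam * (2 * P) \<le> 2 * lam * R * P" by (simp add: algebra_simps)
  have "1 * (2 * P) \<le> lam * (2 * P)" using lam P by (intro mult_right_mono) auto
  then have other_le: "2 * P \<le> 2 * lam * R * P" using lam_le by linarith
  have "norm (pws k d dt a \<alpha> z j) \<le> 2 * lam * R * P" if j: "j \<in> {1..k}" for j
  proof (cases "j = k")
    case False
    then have "j \<in> {1..k-1}" using j by auto
    from other[OF this] show ?thesis using other_le by linarith
  next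
    case True
    from exit consider "norm (pws k d dt a \<alpha> z k) \<le> R"
      | i where "i \<in> {1..k-1}" "norm (pws k d dt a \<alpha> z k) < lam * norm (pws k d dt a \<alpha> z i)"
      unfolding Vplus_def lam_def R_def by (auto simp: not_le not_less)
    then have "norm (pws k d dt a \<alpha> z k) \<le> 2 * lam * R * P"
    proof cases
      case (2 i)
      then have "lam * norm (pws k d dt a \<alpha> z i) \<le> lam * (2 * P)"
        using other lam by (intro mult_left_mono) auto
      then show ?thesis using 2 lam_le by linarith
    qed (use R_le in linarith)
    then show ?thesis using True by simp
  qed
  then have "supnorm k (pws k d dt a \<alpha> z) \<le> 2 * lam * R * P"
    using k3 by (intro supnorm_le) auto
  moreover have "1 \<le> 2 * lam * R * P" using R R_le by linarith
  ultimately show ?thesis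
    unfolding pws_exit_def L_def[symmetric] P_def[symmetric] lam_def[symmetric] R_def[symmetric]
    by simp
qed

lemma pws_filtration_step:
  "filtration_step k d (pws_lam k) (pws_radius k dt Mt) (pws_growth k dt Mt) (pws_exit k dt Mt)
     (pws k d dt a \<alpha>)"
  unfolding filtration_step_def
  by (intro conjI allI impI ballI pws_growth_bound pws_last_coord_ge_Vplus pws_Vplus pws_exit_bound)

end

lemma pws_filtration_sequence:
  assumes "3 \<le> k" "1 \<le> dt" "dt + 2 \<le> d" "0 \<le> Mt"
    and "\<And>n. 1 \<le> n \<Longrightarrow> norm (a n) \<le> Mt"
    and "\<And>n. 1 \<le> n \<Longrightarrow> \<forall>i\<in>midx k dt. norm (\<alpha> n i) \<le> Mt"
    and "\<And>n. 1 \<le> n \<Longrightarrow> \<forall>i\<in>midx k dt. mdeg k i > dt \<longrightarrow> \<alpha> n i = 0"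
  shows "filtration_sequence k d (pws_lam k) (pws_radius k dt Mt) (pws_growth k dt Mt)
           (pws_exit k dt Mt) (\<lambda>n. pws k d dt (a n) (\<alpha> n))"
  unfolding filtration_sequence_def
  using assms pws_constants_ge[OF assms(1,4)] pws_filtration_step[OF assms(1-4)] by auto

theorem lemma3p10:
  fixes k d dt :: nat and a :: "nat \<Rightarrow> complex" and \<alpha> :: "nat \<Rightarrow> (nat \<Rightarrow> nat) \<Rightarrow> complex"
    and mt Mt \<epsilon> :: real and C :: "(nat \<Rightarrow> complex) set"
  assumes "k \<ge> 3" and "dt \<ge> 1" and "dt + 2 \<le> d"
    and "mt > 0" and "Mt > 0"
    and "\<forall>n\<ge>1. mt < norm (a n) \<and> norm (a n) < Mt"
    and "\<forall>n\<ge>1. \<forall>i\<in>midx k dt. norm (\<alpha> n i) < Mt"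
    and "\<forall>n\<ge>1. \<forall>i\<in>midx k dt. mdeg k i > dt \<longrightarrow> \<alpha> n i = 0"
    and "\<forall>n\<ge>1. dt = 1 \<or> (\<exists>i\<in>midx k dt. mdeg k i = dt \<and> \<alpha> n i \<noteq> 0)"
    and "compact C" and "C \<subseteq> Ck k" and "\<epsilon> > 0"
  shows "\<exists>mC\<ge>1. \<forall>m\<ge>mC. \<exists>\<delta><\<epsilon>. \<forall>z\<in>C.
           \<bar>green k d (\<lambda>n. pws k d dt (a n) (\<alpha> n)) z
            - green k d (periodize m (\<lambda>n. pws k d dt (a n) (\<alpha> n))) z\<bar> \<le> \<delta>"
proof -
  let ?S = "\<lambda>n. pws k d dt (a n) (\<alpha> n)"
  let ?B = "pws_exit k dt Mt" and ?K = "pws_growth k dt Mt"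
  have S: "filtration_sequence k d (pws_lam k) (pws_radius k dt Mt) ?K ?B ?S"
    using assms(1-3,5-8) by (intro pws_filtration_sequence) (auto intro: less_imp_le)
  have "1 \<le> k" using assms(1) by simp
  obtain M where M: "\<And>z. z \<in> C \<Longrightarrow> supnorm k z \<le> M"
    using compact_supnorm_bounded[OF \<open>1 \<le> k\<close> assms(10)] by blast
  define E where
    "E m = (real (d - 1) / real d) ^ m * (ln (max 1 M) + ln ?B) + 2 * ln ?K / real d ^ m" for m
  have "E \<longlonglongrightarrow> 0 * (ln (max 1 M) + ln ?B) + 0"
    unfolding E_def using assms(2,3)
    by (intro tendsto_add tendsto_mult_right LIMSEQ_power_zero LIMSEQ_divide_realpow_zero) auto
  then obtain N where N: "\<And>m. N \<le> m \<Longrightarrow> E m < \<epsilon>"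
    using order_tendstoD(2)[of E 0 sequentially \<epsilon>] assms(12) by (auto simp: eventually_sequentially)
  have "\<bar>green k d ?S z - green k d (periodize m ?S) z\<bar> \<le> E m" if "z \<in> C" for m z
    unfolding E_def using S filtration_sequence_periodize[OF S] assms(11) that M
    by (intro green_diff_le_if_orbits_agree) (auto simp: comp_seq_periodize[OF order_refl])
  then have "\<exists>\<delta><\<epsilon>. \<forall>z\<in>C. \<bar>green k d ?S z - green k d (periodize m ?S) z\<bar> \<le> \<delta>"
    if "N \<le> m" for m
    using N[OF that] by blast
  then show ?thesis by (intro exI[of _ "Suc N"]) auto
qed

end
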